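(* Let $p$ be a positive integer. If problem (BM) has a spurious 2-critical point, then $C\in \mathbb{S}^n_{n-p}+\mathcal{L}$ (Minkowski sum), where $\mathbb{S}^n_{n-p}=\{X\in\mathbb{S}^n:\operatorname{rank}X\le n-p\}$ and $\mathcal{L}=\bigcup_I \operatorname{span}\{A_i : i\in I\}$, the union being over all subsets $I\subseteq[m]$ of constraints that can be simultaneously active, i.e. such that some $X\in\mathscr{X}$ satisfies $A_i\bullet X=b_i$ for all $i\in I$.
   Context: Let $\mathbb{S}^n$ be the space of real symmetric $n\times n$ matrices, with inner product $A\bullet B=\operatorname{trace}(A^TB)$ (also used for $A\in\mathbb{S}^n$, $B\in\mathbb{R}^{n\times n}$), and $\mathbb{S}^n_+$ the cone of positive semidefinite matrices. Let $m=m_1+m_2$, let $C,A_1,\dots,A_m\in\mathbb{S}^n$, $b\in\mathbb{R}^m$, $\mathcal{A}^*(\lambda)=\sum_i\lambda_iA_i$. Let $\mathscr{X}=\{X\in\mathbb{S}^n_+ : A_i\bullet X=b_i \ (i\le m_1),\ A_i\bullet X\ge b_i\ (m_1<i\le m)\}$; assume $\mathscr{X}$ is nonempty and that $\min_{X\in\mathscr{X}} C\bullet X$ is attained. Problem (BM) is $\min_{Y\in\mathbb{R}^{n\times p}} C\bullet YY^T$ subject to $YY^T\in\mathscr{X}$. For $Y$, let $I(Y)=\{i: A_i\bullet YY^T=b_i\}$ and $S(\lambda)=C-\mathcal{A}^*(\lambda)$. A point $Y$ is 1-critical for (BM) if $YY^T\in\mathscr{X}$ and there is $\lambda\in\mathbb{R}^{m_1}\times\mathbb{R}^{m_2}_+$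 with $\lambda_i=0$ for $i\notin I(Y)$ and $S(\lambda)Y=0$; it is 2-critical if moreover (for such a $\lambda$) $S(\lambda)\bullet UU^T\ge 0$ for all $U\in\mathbb{R}^{n\times p}$ with $A_i\bullet UY^T=0$ for all $i\in I(Y)$. A critical point is spurious if it is not a global minimizer of (BM). *)

theory Defs
  imports "HOL-Analysis.Analysis"
begin

text \<open>Matrices are rendered as real^'c^'r (r rows, c columns); n = CARD('n), p = CARD('p).
 Constraints are indexed 0..m-1 with m = m1 + m2; indices below m1 are equalities,
 indices m1..m-1 are inequalities.\<close>

definition symm :: "real^'n^'n \<Rightarrow> bool" where
  "symm A \<longleftrightarrow> transpose A = A"

definition psd :: "real^'n^'n \<Rightarrow> bool" where
  "psd X \<longleftrightarrow> symm X \<and> (\<forall>x. 0 \<le> x \<bullet> (X *v x))"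

definition frob :: "real^'c^'r \<Rightarrow> real^'c^'r \<Rightarrow> real" where
  "frob A B = trace (transpose A ** B)"

definition feasible ::
  "nat \<Rightarrow> nat \<Rightarrow> (nat \<Rightarrow> real^'n^'n) \<Rightarrow> (nat \<Rightarrow> real) \<Rightarrow> (real^'n^'n) set" where
  "feasible m1 m2 A b = {X. psd X \<and> (\<forall>i<m1. frob (A i) X = b i)
      \<and> (\<forall>i. m1 \<le> i \<and> i < m1 + m2 \<longrightarrow> frob (A i) X \<ge> b i)}"

definition active :: "nat \<Rightarrow> nat \<Rightarrow> (nat \<Rightarrow> real^'n^'n) \<Rightarrow> (nat \<Rightarrow> real) \<Rightarrow> real^'p^'n \<Rightarrow> nat set" where
  "active m1 m2 A b Y = {i. i < m1 + m2 \<and> frob (A i) (Y ** transpose Y) = b i}"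

definition Smat :: "nat \<Rightarrow> real^'n^'n \<Rightarrow> (nat \<Rightarrow> real^'n^'n) \<Rightarrow> (nat \<Rightarrow> real) \<Rightarrow> real^'n^'n" where
  "Smat m C A lam = C - (\<Sum>i<m. lam i *\<^sub>R A i)"

definition mult_ok :: "nat \<Rightarrow> nat \<Rightarrow> real^'n^'n \<Rightarrow> (nat \<Rightarrow> real^'n^'n) \<Rightarrow> (nat \<Rightarrow> real) \<Rightarrow> real^'p^'n \<Rightarrow> (nat \<Rightarrow> real) \<Rightarrow> bool" where
  "mult_ok m1 m2 C A b Y lam \<longleftrightarrow>
     (\<forall>i. m1 \<le> i \<and> i < m1 + m2 \<longrightarrow> 0 \<le> lam i)
   \<and> (\<forall>i<m1 + m2. i \<notin> active m1 m2 A b Y \<longrightarrow> lam i = 0)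
   \<and> Smat (m1 + m2) C A lam ** Y = 0"

definition one_critical :: "nat \<Rightarrow> nat \<Rightarrow> real^'n^'n \<Rightarrow> (nat \<Rightarrow> real^'n^'n) \<Rightarrow> (nat \<Rightarrow> real) \<Rightarrow> real^'p^'n \<Rightarrow> bool" where
  "one_critical m1 m2 C A b Y \<longleftrightarrow> Y ** transpose Y \<in> feasible m1 m2 A b
     \<and> (\<exists>lam. mult_ok m1 m2 C A b Y lam)"

definition two_critical :: "nat \<Rightarrow> nat \<Rightarrow> real^'n^'n \<Rightarrow> (nat \<Rightarrow> real^'n^'n) \<Rightarrow> (nat \<Rightarrow> real) \<Rightarrow> real^'p^'n \<Rightarrow> bool" where
  "two_critical m1 m2 C A b Y \<longleftrightarrow> Y ** transpose Y \<in> feasible m1 m2 A b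
     \<and> (\<exists>lam. mult_ok m1 m2 C A b Y lam
          \<and> (\<forall>U :: real^'p^'n. (\<forall>i\<in>active m1 m2 A b Y. frob (A i) (U ** transpose Y) = 0)
                \<longrightarrow> 0 \<le> frob (Smat (m1 + m2) C A lam) (U ** transpose U)))"

definition BM_global_min :: "nat \<Rightarrow> nat \<Rightarrow> real^'n^'n \<Rightarrow> (nat \<Rightarrow> real^'n^'n) \<Rightarrow> (nat \<Rightarrow> real) \<Rightarrow> real^'p^'n \<Rightarrow> bool" where
  "BM_global_min m1 m2 C A b Y \<longleftrightarrow> Y ** transpose Y \<in> feasible m1 m2 A b
     \<and> (\<forall>Y' :: real^'p^'n. Y' ** transpose Y' \<in> feasible m1 m2 A b
          \<longrightarrow> frob C (Y ** transpose Y) \<le> frob C (Y' ** transpose Y'))"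

definition spurious_two_critical :: "nat \<Rightarrow> nat \<Rightarrow> real^'n^'n \<Rightarrow> (nat \<Rightarrow> real^'n^'n) \<Rightarrow> (nat \<Rightarrow> real) \<Rightarrow> real^'p^'n \<Rightarrow> bool" where
  "spurious_two_critical m1 m2 C A b Y \<longleftrightarrow>
     two_critical m1 m2 C A b Y \<and> \<not> BM_global_min m1 m2 C A b Y"

definition simult_active :: "nat \<Rightarrow> nat \<Rightarrow> (nat \<Rightarrow> real^'n^'n) \<Rightarrow> (nat \<Rightarrow> real) \<Rightarrow> nat set \<Rightarrow> bool" where
  "simult_active m1 m2 A b I \<longleftrightarrow> I \<subseteq> {..<m1 + m2}
     \<and> (\<exists>X\<in>feasible m1 m2 A b. \<forall>i\<in>I. frob (A i) X = b i)"

definition Lset :: "nat \<Rightarrow> nat \<Rightarrow> (nat \<Rightarrow> real^'n^'n) \<Rightarrow> (nat \<Rightarrow> real) \<Rightarrow> (real^'n^'n) set" where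
  "Lset m1 m2 A b = (\<Union>I\<in>{I. simult_active m1 m2 A b I}. span (A ` I))"

definition low_rank_sym :: "nat \<Rightarrow> (real^'n^'n) set" where
  "low_rank_sym k = {X. symm X \<and> rank X \<le> k}"

end

theory Submission
  imports Defs
begin

text \<open>At a 2-critical point \<open>Y\<close> with multiplier \<open>\<lambda>\<close>, split \<open>C = S(\<lambda>) + \<Sum>\<^sub>i \<lambda>\<^sub>i A\<^sub>i\<close>. The sum
  lies in the span of the constraints active at \<open>Y Y\<^sup>T\<close>, and these are simultaneously active.
  If \<open>S(\<lambda>)\<close> were positive semidefinite, weak duality (\<open>S(\<lambda>) \<bullet> X \<ge> 0\<close> on the PSD cone,
  \<open>S(\<lambda>) \<bullet> Y Y\<^sup>T = 0\<close> and complementary slackness) would make \<open>Y\<close> a global minimiser; so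
  there is \<open>x\<close> with \<open>x\<^sup>T S(\<lambda>) x < 0\<close>. If \<open>Y z = 0\<close> for some \<open>z \<noteq> 0\<close>, then \<open>U = x z\<^sup>T\<close>
  violates the second-order condition, so \<open>Y\<close> has rank \<open>p\<close>. Finally \<open>S(\<lambda>) Y = 0\<close> with
  \<open>S(\<lambda>)\<close> symmetric makes the ranges of \<open>S(\<lambda>)\<close> and \<open>Y\<close> orthogonal, whence
  \<open>rank S(\<lambda>) \<le> n - p\<close>.\<close>

lemma frob_eq_inner: "frob (A::real^'c^'r) B = A \<bullet> B"
proof -
  have "frob A B = (\<Sum>i\<in>UNIV. \<Sum>k\<in>UNIV. A$k$i * B$k$i)"
    by (simp add: frob_def trace_def matrix_matrix_mult_def transpose_def)
  also have "\<dots> = (\<Sum>k\<in>UNIV. \<Sum>i\<in>UNIV. A$k$i * B$k$i)"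
    by (rule sum.swap)
  finally show ?thesis
    by (simp add: inner_vec_def)
qed

lemma frob_mult_transpose_right:
  fixes S :: "real^'n^'m" and Y :: "real^'p^'m" and Z :: "real^'p^'n"
  shows "frob S (Y ** transpose Z) = frob (S ** Z) Y"
  unfolding frob_def
  by (metis matrix_mul_assoc matrix_transpose_mul trace_mul_sym)

lemma inner_mult_vector_transpose:
  fixes S :: "real^'m^'n"
  shows "(S *v a) \<bullet> y = a \<bullet> (transpose S *v y)"
  by (metis dot_lmul_matrix vector_transpose_matrix)

lemma symm_inner_mult_vector:
  assumes "symm X"
  shows "(X *v x) \<bullet> y = x \<bullet> (X *v y)"
  using assms inner_mult_vector_transpose[of X x y] by (simp add: symm_def)

lemma symm_quadratic_form_add:
  assumes "symm X"
  shows "(u + t *\<^sub>R v) \<bullet> (X *v (u + t *\<^sub>R v))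
           = u \<bullet> (X *v u) + 2 * t * (v \<bullet> (X *v u)) + t\<^sup>2 * (v \<bullet> (X *v v))"
proof -
  have "u \<bullet> (X *v v) = v \<bullet> (X *v u)"
    using symm_inner_mult_vector[OF assms, of v u] by (simp add: inner_commute)
  then show ?thesis
    by (simp add: matrix_vector_right_distrib matrix_vector_mult_scaleR inner_add_left
        inner_add_right algebra_simps power2_eq_square)
qed

lemma quadratic_nonneg_imp_linear_coeff_eq_0:
  fixes a B :: real
  assumes "\<And>t. 0 \<le> 2 * t * a + t\<^sup>2 * B"
  shows "a = 0"
proof (rule ccontr)
  assume "a \<noteq> 0"
  have "B \<ge> 0"
    using assms[of 1] assms[of "-1"] by simp
  have "0 \<le> 2 * (- a / (B + 1)) * a + (- a / (B + 1))\<^sup>2 * B"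
    by (rule assms)
  also have "\<dots> = - a\<^sup>2 * (B + 2) / (B + 1)\<^sup>2"
  proof -
    have "B + 1 \<noteq> 0"
      using \<open>B \<ge> 0\<close> by simp
    then show ?thesis
      by (simp add: divide_simps power2_eq_square) algebra
  qed
  also have "\<dots> < 0"
    using \<open>a \<noteq> 0\<close> \<open>B \<ge> 0\<close> by (simp add: divide_neg_pos)
  finally show False by simp
qed

lemma psd_quadratic_form_eq_0_imp:
  fixes X :: "real^'n^'n"
  assumes "psd X" and "x \<bullet> (X *v x) = 0"
  shows "X *v x = 0"
proof -
  have "0 \<le> 2 * t * ((X *v x) \<bullet> (X *v x)) + t\<^sup>2 * ((X *v x) \<bullet> (X *v (X *v x)))" for t
  proof -
    have "0 \<le> (x + t *\<^sub>R (X *v x)) \<bullet> (X *v (x + t *\<^sub>R (X *v x)))"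
      using \<open>psd X\<close> unfolding psd_def by blast
    then show ?thesis
      using \<open>psd X\<close> \<open>x \<bullet> (X *v x) = 0\<close>
      by (simp add: symm_quadratic_form_add psd_def)
  qed
  then have "(X *v x) \<bullet> (X *v x) = 0"
    by (rule quadratic_nonneg_imp_linear_coeff_eq_0)
  then show ?thesis
    by simp
qed

definition outer :: "real^'a \<Rightarrow> real^'b \<Rightarrow> real^'b^'a" where
  "outer x y = (\<chi> i j. x$i * y$j)"

lemma outer_mult_vector: "outer x y *v z = (y \<bullet> z) *\<^sub>R x"
  by (simp add: outer_def matrix_vector_mult_def inner_vec_def vec_eq_iff sum_distrib_left mult_ac)

lemma outer_scaleR_self: "outer (a *\<^sub>R w) (a *\<^sub>R w) = a\<^sup>2 *\<^sub>R outer w w"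
  by (simp add: outer_def vec_eq_iff power2_eq_square)

lemma outer_mult_transpose: "outer x z ** transpose Y = outer x (Y *v z)"
  by (simp add: vec_eq_iff outer_def matrix_matrix_mult_def matrix_vector_mult_def transpose_def
      sum_distrib_left mult_ac)

lemma outer_mult_transpose_outer: "outer x z ** transpose (outer y z) = (z \<bullet> z) *\<^sub>R outer x y"
  by (simp add: vec_eq_iff outer_def matrix_matrix_mult_def transpose_def inner_vec_def
      sum_distrib_left sum_distrib_right mult_ac)

lemma outer_0_right [simp]: "outer x 0 = 0"
  by (simp add: vec_eq_iff outer_def)

lemma frob_outer_self: "frob S (outer w w) = w \<bullet> (S *v w)"
  by (simp add: frob_eq_inner outer_def matrix_vector_mult_def inner_vec_def sum_distrib_left mult_ac)

lemma psd_quadratic_form_pos: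
  fixes X :: "real^'n^'n"
  assumes "psd X" and "X *v x \<noteq> 0"
  shows "x \<bullet> (X *v x) > 0"
  using assms psd_quadratic_form_eq_0_imp[OF assms(1)] unfolding psd_def
  by (metis order_neq_le_trans)

lemma psd_deflate:
  fixes X :: "real^'n^'n"
  assumes "psd X" and "X *v x \<noteq> 0"
  defines "X' \<equiv> X - inverse (x \<bullet> (X *v x)) *\<^sub>R outer (X *v x) (X *v x)"
  shows "psd X'" and "{z. X *v z = 0} \<subset> {z. X' *v z = 0}"
proof -
  define w c where "w = X *v x" and "c = x \<bullet> (X *v x)"
  have "symm X"
    using \<open>psd X\<close> unfolding psd_def by simp
  have "c > 0"
    unfolding c_def using assms(1,2) by (rule psd_quadratic_form_pos)
  have X'_mult: "X' *v z = X *v z - ((w \<bullet> z) / c) *\<^sub>R w" for z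
    unfolding X'_def w_def c_def
    by (simp add: matrix_vector_mult_diff_rdistrib scaleR_matrix_vector_assoc[symmetric]
        outer_mult_vector divide_inverse_commute)
  have w_inner: "w \<bullet> z = x \<bullet> (X *v z)" for z
    unfolding w_def by (rule symm_inner_mult_vector[OF \<open>symm X\<close>])
  show "psd X'"
    unfolding psd_def
  proof (intro conjI allI)
    show "symm X'"
      using \<open>symm X\<close> unfolding X'_def symm_def by (simp add: vec_eq_iff transpose_def outer_def)
  next
    fix z
    define t where "t = - (w \<bullet> z) / c"
    \<comment> \<open>minimise the quadratic form of \<open>X\<close> along the line \<open>z + t x\<close>\<close>
    have "0 \<le> (z + t *\<^sub>R x) \<bullet> (X *v (z + t *\<^sub>R x))"
      using \<open>psd X\<close> unfolding psd_def by blast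
    also have "\<dots> = z \<bullet> (X *v z) + 2 * t * (x \<bullet> (X *v z)) + t\<^sup>2 * c"
      unfolding c_def by (rule symm_quadratic_form_add[OF \<open>symm X\<close>])
    also have "\<dots> = z \<bullet> (X' *v z)"
      using \<open>c > 0\<close> unfolding X'_mult t_def w_inner[symmetric]
      by (simp add: inner_diff_right inner_commute field_simps power2_eq_square)
    finally show "0 \<le> z \<bullet> (X' *v z)" .
  qed
  have "x \<in> {z. X' *v z = 0}" and "x \<notin> {z. X *v z = 0}"
    using \<open>c > 0\<close> \<open>X *v x \<noteq> 0\<close> unfolding X'_mult c_def w_def by (auto simp: inner_commute)
  moreover have "{z. X *v z = 0} \<subseteq> {z. X' *v z = 0}"
    using w_inner by (auto simp: X'_mult)
  ultimately show "{z. X *v z = 0} \<subset> {z. X' *v z = 0}"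
    by blast
qed

lemma subspace_null_mult_vector: "subspace {z. (X::real^'m^'n) *v z = 0}"
  by (simp add: subspace_def matrix_vector_right_distrib matrix_vector_mult_scaleR)

lemma dim_psubset_subspace:
  fixes S T :: "'a::euclidean_space set"
  assumes "subspace S" and "subspace T" and "S \<subset> T"
  shows "dim S < dim T"
  using assms dim_subset[of S T] subspace_dim_equal[of S T] by (auto simp: less_le)

lemma psd_eq_sum_outer:
  fixes X :: "real^'n^'n"
  assumes "psd X"
  shows "\<exists>ws. X = (\<Sum>w\<leftarrow>ws. outer w w)"
  using assms
proof (induction "CARD('n) - dim {z. X *v z = 0}" arbitrary: X rule: less_induct)
  case less
  show ?case
  proof (cases "X = 0")
    case True
    then show ?thesis
      by (intro exI[of _ "[]"]) simp
  next
    case False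
    then obtain x where x: "X *v x \<noteq> 0"
      by (metis matrix_eq matrix_vector_mult_0)
    define c where "c = x \<bullet> (X *v x)"
    define X' where "X' = X - inverse c *\<^sub>R outer (X *v x) (X *v x)"
    have "psd X'" and null_psubset: "{z. X *v z = 0} \<subset> {z. X' *v z = 0}"
      using psd_deflate[OF less.prems x] unfolding X'_def c_def by auto
    have "dim {z. X *v z = 0} < dim {z. X' *v z = 0}"
      using null_psubset by (simp add: dim_psubset_subspace subspace_null_mult_vector)
    moreover have "dim {z. X' *v z = 0} \<le> CARD('n)"
      by (rule dim_subset_UNIV_cart)
    ultimately have "CARD('n) - dim {z. X' *v z = 0} < CARD('n) - dim {z. X *v z = 0}"
      by linarith
    then obtain ws where ws: "X' = (\<Sum>w\<leftarrow>ws. outer w w)"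
      using less.hyps[of X'] \<open>psd X'\<close> by blast
    define v where "v = sqrt (inverse c) *\<^sub>R (X *v x)"
    have "c > 0"
      unfolding c_def using less.prems x by (rule psd_quadratic_form_pos)
    then have "X = outer v v + X'"
      unfolding X'_def v_def outer_scaleR_self by simp
    then show ?thesis
      using ws by (intro exI[of _ "v # ws"]) simp
  qed
qed

lemma frob_sum_list_outer:
  "frob S (\<Sum>w\<leftarrow>ws. outer w w) = (\<Sum>w\<leftarrow>ws. w \<bullet> (S *v w))"
  by (induction ws) (simp_all add: frob_eq_inner inner_add_right frob_outer_self[unfolded frob_eq_inner])

lemma frob_nonneg_if_psd:
  fixes S X :: "real^'n^'n"
  assumes "\<forall>x. 0 \<le> x \<bullet> (S *v x)" and "psd X"
  shows "0 \<le> frob S X"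
proof -
  obtain ws where "X = (\<Sum>w\<leftarrow>ws. outer w w)"
    using psd_eq_sum_outer[OF \<open>psd X\<close>] by blast
  then have "frob S X = (\<Sum>w\<leftarrow>ws. w \<bullet> (S *v w))"
    by (simp add: frob_sum_list_outer)
  also have "\<dots> \<ge> 0"
    using assms(1) by (intro sum_list_nonneg) auto
  finally show ?thesis .
qed

lemma rank_add_rank_le_if_transpose_mult_eq_0:
  fixes S :: "real^'m^'n" and Y :: "real^'p^'n"
  assumes "transpose S ** Y = 0"
  shows "rank S + rank Y \<le> CARD('n)"
proof -
  have orth: "u \<bullet> v = 0" if u: "u \<in> range ((*v) S)" and v: "v \<in> range ((*v) Y)" for u v
  proof -
    obtain a c where "u = S *v a" and "v = Y *v c"
      using u v by blast
    then show ?thesis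
      using assms by (simp add: inner_mult_vector_transpose matrix_vector_mul_assoc)
  qed
  have "rank S + rank Y = dim (range ((*v) S) \<union> range ((*v) Y))"
    using dim_orthogonal_sum[OF orth] by (simp add: rank_dim_range)
  also have "\<dots> \<le> CARD('n)"
    by (rule dim_subset_UNIV_cart)
  finally show ?thesis .
qed

lemma second_order_indefinite_imp_full_rank:
  fixes Y :: "real^'p^'n" and S :: "real^'n^'n"
  assumes second_order: "\<forall>U::real^'p^'n. (\<forall>i\<in>I. frob (A i) (U ** transpose Y) = 0)
                            \<longrightarrow> 0 \<le> frob S (U ** transpose U)"
    and "x \<bullet> (S *v x) < 0"
  shows "rank Y = CARD('p)"
proof (rule ccontr)
  assume "rank Y \<noteq> CARD('p)"
  then obtain z where "z \<noteq> 0" and "Y *v z = 0"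
    using matrix_nonfull_linear_equations_eq by blast
  \<comment> \<open>\<open>U = x z\<^sup>T\<close> is tangent to every constraint because \<open>U Y\<^sup>T = x (Y z)\<^sup>T = 0\<close>\<close>
  have "outer x z ** transpose Y = 0"
    by (simp add: outer_mult_transpose \<open>Y *v z = 0\<close>)
  then have "0 \<le> frob S (outer x z ** transpose (outer x z))"
    using second_order by (simp add: frob_eq_inner)
  also have "\<dots> = (z \<bullet> z) * (x \<bullet> (S *v x))"
    by (simp add: outer_mult_transpose_outer frob_eq_inner frob_outer_self[symmetric])
  also have "\<dots> < 0"
    using \<open>z \<noteq> 0\<close> \<open>x \<bullet> (S *v x) < 0\<close> by (simp add: mult_pos_neg)
  finally show False by simp
qed

lemma symm_Smat:
  assumes "symm C" and "\<forall>i<m. symm (A i)"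
  shows "symm (Smat m C A lam)"
proof -
  have "transpose (\<Sum>i<m. lam i *\<^sub>R A i) = (\<Sum>i<m. lam i *\<^sub>R A i)"
    using assms(2) unfolding symm_def by (simp add: vec_eq_iff transpose_def sum_component)
  then show ?thesis
    using assms(1) unfolding symm_def Smat_def by (simp add: vec_eq_iff transpose_def)
qed

lemma frob_Smat_decomp:
  "frob C X = frob (Smat m C A lam) X + (\<Sum>i<m. lam i * frob (A i) X)"
  by (simp add: Smat_def frob_eq_inner inner_diff_left inner_sum_left)

lemma BM_global_min_if_Smat_psd:
  fixes Y :: "real^'p^'n"
  assumes feasible_Y: "Y ** transpose Y \<in> feasible m1 m2 A b"
    and ok: "mult_ok m1 m2 C A b Y lam"
    and S_nonneg: "\<forall>x. 0 \<le> x \<bullet> (Smat (m1 + m2) C A lam *v x)"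
  shows "BM_global_min m1 m2 C A b Y"
  unfolding BM_global_min_def
proof (intro conjI feasible_Y allI impI)
  fix Y' :: "real^'p^'n"
  let ?S = "Smat (m1 + m2) C A lam" and ?X = "Y ** transpose Y" and ?X' = "Y' ** transpose Y'"
  assume feasible_Y': "?X' \<in> feasible m1 m2 A b"
  have "frob ?S ?X = frob (?S ** Y) Y"
    by (rule frob_mult_transpose_right)
  also have "\<dots> = 0"
    using ok by (simp add: mult_ok_def frob_eq_inner)
  finally have "frob ?S ?X = 0" .
  moreover have "0 \<le> frob ?S ?X'"
    using frob_nonneg_if_psd[OF S_nonneg] feasible_Y' by (simp add: feasible_def)
  \<comment> \<open>complementary slackness: each \<open>\<lambda>\<^sub>i\<close> is either free on an equality, zero, or
    nonnegative on an inequality active at \<open>Y\<close>\<close>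
  moreover have "lam i * frob (A i) ?X \<le> lam i * frob (A i) ?X'" if "i < m1 + m2" for i
  proof (cases "i < m1 \<or> i \<notin> active m1 m2 A b Y")
    case True
    then show ?thesis
      using ok feasible_Y feasible_Y' \<open>i < m1 + m2\<close> by (auto simp: mult_ok_def feasible_def)
  next
    case False
    then have "frob (A i) ?X = b i" and "b i \<le> frob (A i) ?X'" and "0 \<le> lam i"
      using ok feasible_Y' \<open>i < m1 + m2\<close> by (auto simp: mult_ok_def feasible_def active_def)
    then show ?thesis
      by (simp add: mult_left_mono)
  qed
  then have "(\<Sum>i<m1 + m2. lam i * frob (A i) ?X) \<le> (\<Sum>i<m1 + m2. lam i * frob (A i) ?X')"
    by (intro sum_mono) simp
  ultimately show "frob C ?X \<le> frob C ?X'"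
    by (simp add: frob_Smat_decomp[of C _ "m1 + m2" A lam])
qed

lemma multiplier_sum_in_Lset:
  fixes Y :: "real^'p^'n"
  assumes "Y ** transpose Y \<in> feasible m1 m2 A b" and "mult_ok m1 m2 C A b Y lam"
  shows "(\<Sum>i<m1 + m2. lam i *\<^sub>R A i) \<in> Lset m1 m2 A b"
proof -
  let ?I = "active m1 m2 A b Y"
  have "simult_active m1 m2 A b ?I"
    using assms(1) by (auto simp: simult_active_def active_def)
  moreover have "(\<Sum>i<m1 + m2. lam i *\<^sub>R A i) \<in> span (A ` ?I)"
  proof (rule span_sum)
    fix i assume "i \<in> {..<m1 + m2}"
    then show "lam i *\<^sub>R A i \<in> span (A ` ?I)"
      using assms(2) by (cases "i \<in> ?I") (auto simp: mult_ok_def span_base span_scale span_zero)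
  qed
  ultimately show ?thesis
    unfolding Lset_def by blast
qed

theorem theorem3:
  fixes m1 m2 :: nat
    and C :: "real^'n^'n"
    and A :: "nat \<Rightarrow> real^'n^'n"
    and b :: "nat \<Rightarrow> real"
    and Y :: "real^'p^'n"
  assumes "symm C"
    and "\<forall>i<m1 + m2. symm (A i)"
    and "feasible m1 m2 A b \<noteq> {}"
    and "\<exists>X\<in>feasible m1 m2 A b. \<forall>X'\<in>feasible m1 m2 A b. frob C X \<le> frob C X'"
    and "spurious_two_critical m1 m2 C A b Y"
  shows "C \<in> low_rank_sym (CARD('n) - CARD('p)) + Lset m1 m2 A b"
proof -
  obtain lam where feasible_Y: "Y ** transpose Y \<in> feasible m1 m2 A b"
    and not_min: "\<not> BM_global_min m1 m2 C A b Y"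
    and ok: "mult_ok m1 m2 C A b Y lam"
    and second_order: "\<forall>U :: real^'p^'n. (\<forall>i\<in>active m1 m2 A b Y. frob (A i) (U ** transpose Y) = 0)
                \<longrightarrow> 0 \<le> frob (Smat (m1 + m2) C A lam) (U ** transpose U)"
    using assms(5) unfolding spurious_two_critical_def two_critical_def by blast
  define S where "S = Smat (m1 + m2) C A lam"
  obtain x where "x \<bullet> (S *v x) < 0"
    using BM_global_min_if_Smat_psd[OF feasible_Y ok] not_min unfolding S_def by (meson not_le)
  then have "rank Y = CARD('p)"
    using second_order_indefinite_imp_full_rank[OF second_order[folded S_def]] by blast
  moreover have "symm S"
    unfolding S_def using assms(1,2) by (rule symm_Smat)
  moreover have "transpose S ** Y = 0"
    using ok \<open>symm S\<close> unfolding S_def mult_ok_def symm_def by simp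
  ultimately have "S \<in> low_rank_sym (CARD('n) - CARD('p))"
    using rank_add_rank_le_if_transpose_mult_eq_0[of S Y] unfolding low_rank_sym_def by simp
  moreover have "C = S + (\<Sum>i<m1 + m2. lam i *\<^sub>R A i)"
    unfolding S_def Smat_def by simp
  ultimately show ?thesis
    using multiplier_sum_in_Lset[OF feasible_Y ok] by (metis set_plus_intro)
qed

end
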